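(* Let $(S,\lambda_S^\bullet,\mu_S^{(0)})$, $(G,\lambda_G^\bullet,\mu_G^{(0)})$, $(T,\lambda_T^\bullet,\mu_T^{(0)})$ be Haar groupoids, $p:S\to G$, $q:T\to G$ homomorphisms of Haar groupoids with weak pullback $P$. Let $\gamma_p^\bullet$ be a locally finite Borel system of measures on $p|_{S^{(0)}}:S^{(0)}\to G^{(0)}$ which is a disintegration of $\mu_S^{(0)}$ with respect to $\mu_G^{(0)}$, and $\gamma_q^\bullet$ a locally finite Borel system of measures on $q|_{T^{(0)}}:T^{(0)}\to G^{(0)}$ which is a disintegration of $\mu_T^{(0)}$ with respect to $\mu_G^{(0)}$. Then the projection $\pi_G:P^{(0)}\to G$, $(s,g,t)\mapsto g$, admits a locally finite Borel system of measures $\eta^\bullet$ given by $\eta^x=\gamma_p^{r_G(x)}\times\delta_x\times\gamma_q^{d_G(x)}$ for $x\in G$.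
   Context: A system of measures on a Borel map $\pi:X\to Y$ is a family $\{\lambda^y\}_{y\in Y}$ of positive Borel measures on $X$ with each $\lambda^y$ concentrated on $\pi^{-1}(y)$; it is a Borel system of measures (BSM) if $y\mapsto\lambda^y(E)$ is Borel for each Borel $E\subseteq X$; it is locally finite if every $x\in X$ has a neighborhood $U$ with $\lambda^y(U)<\infty$ for all $y$. A BSM $\gamma^\bullet$ on $f:X\to Y$ is a disintegration of a measure $\mu$ on $X$ with respect to a measure $\nu$ on $Y$ if $\mu(E)=\int_Y\gamma^y(E)\,d\nu(y)$ for all Borel $E$. For a groupoid, $G^{(0)}$ is the unit space, $r,d$ range/source, $G^u=r^{-1}(u)$. A Haar groupoid $(G,\lambda^\bullet,\mu^{(0)})$ is a second countable, locally compact, Hausdorff topological groupoid with a continuous left Haar system $\lambda^\bullet$ (a system of measures on $r$ that is continuous in the sense that $u\mapsto\int f d\lambda^u$ is continuous for continuous compactly supported $f\ge0$, left invariant $\lambda^{d(x)}(E)=\lambda^{r(x)}(x(E\cap G^{d(x)}))$, and positive on open sets meeting $G^u$) and a non-zero Radon measure $\mu^{(0)}$ on $G^{(0)}$ quasi-invariant in the sense that the induced measure $\mu(E)=\int\lambda^u(E)d\mu^{(0)}(u)$ is equivalent to $E\mapsto\mu(E^{-1})$. A homomorphism of Haar groupoids is a continuous groupoid homomorphism preserving the measure class of induced measures. The weak pullback has unit space $P^{(0)}=\{(s,g,t)\in S^{(0)}\times G\times T^{(0)}: r_G(g)=p(s),\ d_G(g)=q(t)\}$ with the subspace topology; $\eta^x$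 is a measure on $S^{(0)}\times G\times T^{(0)}$ concentrated on $P^{(0)}$, regarded as a measure on $P^{(0)}$. *)

theory Defs
  imports "HOL-Probability.Probability"
begin

section \<open>Groupoids whose elements form the whole (topological) type\<close>

record 'a groupoid =
  units :: "'a set"
  rng   :: "'a \<Rightarrow> 'a"
  src   :: "'a \<Rightarrow> 'a"
  mult  :: "'a \<Rightarrow> 'a \<Rightarrow> 'a"  \<comment> \<open>composition, meaningful when src x = rng y\<close>
  ginv  :: "'a \<Rightarrow> 'a"

definition groupoid :: "'a groupoid \<Rightarrow> bool" where
  "groupoid G \<longleftrightarrow>
     (\<forall>x. rng G x \<in> units G \<and> src G x \<in> units G) \<and>
     (\<forall>u\<in>units G. rng G u = u \<and> src G u = u) \<and>
     (\<forall>x y. src G x = rng G y \<longrightarrow>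
        rng G (mult G x y) = rng G x \<and> src G (mult G x y) = src G y) \<and>
     (\<forall>x y z. src G x = rng G y \<and> src G y = rng G z \<longrightarrow>
        mult G (mult G x y) z = mult G x (mult G y z)) \<and>
     (\<forall>x. mult G x (src G x) = x \<and> mult G (rng G x) x = x) \<and>
     (\<forall>x. rng G (ginv G x) = src G x \<and> src G (ginv G x) = rng G x \<and>
        mult G x (ginv G x) = rng G x \<and> mult G (ginv G x) x = src G x)"

text \<open>Second countable, locally compact, Hausdorff topological groupoid
  (second countability and Hausdorffness come from the type classes).\<close>
definition topological_groupoid ::
  "('a::{second_countable_topology,t2_space}) groupoid \<Rightarrow> bool" where
  "topological_groupoid G \<longleftrightarrow> groupoid G \<and>
     locally_compact_space (euclidean :: 'a topology) \<and>
     continuous_on UNIV (rng G) \<and> continuous_on UNIV (src G) \<and>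
     continuous_on UNIV (ginv G) \<and>
     continuous_on {(x, y). src G x = rng G y} (\<lambda>(x, y). mult G x y)"

definition range_fibre :: "'a groupoid \<Rightarrow> 'a \<Rightarrow> 'a set" where
  "range_fibre G u = rng G -` {u}"

definition left_translate :: "'a groupoid \<Rightarrow> 'a \<Rightarrow> 'a set \<Rightarrow> 'a set" where
  "left_translate G x A = mult G x ` A"

definition continuous_left_Haar_system ::
  "('a::{second_countable_topology,t2_space}) groupoid \<Rightarrow> ('a \<Rightarrow> 'a measure) \<Rightarrow> bool" where
  "continuous_left_Haar_system G lam \<longleftrightarrow>
     \<comment> \<open>system of (positive Borel) measures on r\<close>
     (\<forall>u\<in>units G. sets (lam u) = sets borel \<and>
        emeasure (lam u) (UNIV - range_fibre G u) = 0) \<and>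
     \<comment> \<open>continuity\<close>
     (\<forall>f :: 'a \<Rightarrow> real. continuous_on UNIV f \<and> compact (closure {x. f x \<noteq> 0}) \<and>
        (\<forall>x. 0 \<le> f x) \<longrightarrow>
        continuous_on (units G) (\<lambda>u. \<integral>\<^sup>+ x. ennreal (f x) \<partial>lam u)) \<and>
     \<comment> \<open>left invariance\<close>
     (\<forall>x. \<forall>E\<in>sets borel.
        emeasure (lam (src G x)) E =
        emeasure (lam (rng G x)) (left_translate G x (E \<inter> range_fibre G (src G x)))) \<and>
     \<comment> \<open>positivity on open sets meeting G^u\<close>
     (\<forall>u\<in>units G. \<forall>U. open U \<and> U \<inter> range_fibre G u \<noteq> {} \<longrightarrow> emeasure (lam u) U > 0)"

definition radon_on :: "('a::topological_space) set \<Rightarrow> 'a measure \<Rightarrow> bool" where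
  "radon_on X m \<longleftrightarrow> sets m = sets borel \<and> emeasure m (UNIV - X) = 0 \<and>
     (\<forall>K. compact K \<longrightarrow> emeasure m K < \<infinity>)"

definition induced_measure ::
  "('a::topological_space \<Rightarrow> 'a measure) \<Rightarrow> 'a measure \<Rightarrow> 'a measure" where
  "induced_measure lam m0 = measure_of UNIV (sets borel)
     (\<lambda>E. \<integral>\<^sup>+ u. emeasure (lam u) E \<partial>m0)"

definition Haar_groupoid ::
  "('a::{second_countable_topology,t2_space}) groupoid \<Rightarrow> ('a \<Rightarrow> 'a measure) \<Rightarrow> 'a measure \<Rightarrow> bool" where
  "Haar_groupoid G lam m0 \<longleftrightarrow>
     topological_groupoid G \<and> continuous_left_Haar_system G lam \<and>
     radon_on (units G) m0 \<and> emeasure m0 UNIV \<noteq> 0 \<and>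
     \<comment> \<open>quasi-invariance: \<mu> equivalent to E \<mapsto> \<mu>(E^{-1})\<close>
     (\<forall>E\<in>sets borel. emeasure (induced_measure lam m0) E = 0 \<longleftrightarrow>
        emeasure (induced_measure lam m0) (ginv G ` E) = 0)"

definition Haar_groupoid_hom ::
  "('a::{second_countable_topology,t2_space}) groupoid \<Rightarrow> ('a \<Rightarrow> 'a measure) \<Rightarrow> 'a measure \<Rightarrow>
   ('b::{second_countable_topology,t2_space}) groupoid \<Rightarrow> ('b \<Rightarrow> 'b measure) \<Rightarrow> 'b measure \<Rightarrow>
   ('a \<Rightarrow> 'b) \<Rightarrow> bool" where
  "Haar_groupoid_hom G lamG mG H lamH mH \<phi> \<longleftrightarrow>
     Haar_groupoid G lamG mG \<and> Haar_groupoid H lamH mH \<and>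
     continuous_on UNIV \<phi> \<and>
     (\<forall>x y. src G x = rng G y \<longrightarrow>
        src H (\<phi> x) = rng H (\<phi> y) \<and> \<phi> (mult G x y) = mult H (\<phi> x) (\<phi> y)) \<and>
     (\<forall>E\<in>sets borel. emeasure (induced_measure lamH mH) E = 0 \<longleftrightarrow>
        emeasure (induced_measure lamG mG) (\<phi> -` E) = 0)"

text \<open>Measures on X \<subseteq> 'a are represented as Borel measures on 'a concentrated on X.\<close>
definition system_of_measures ::
  "('a::topological_space) set \<Rightarrow> ('b::topological_space) set \<Rightarrow> ('a \<Rightarrow> 'b) \<Rightarrow> ('b \<Rightarrow> 'a measure) \<Rightarrow> bool" where
  "system_of_measures X Y \<pi> lam \<longleftrightarrow>
     (\<forall>y\<in>Y. sets (lam y) = sets borel \<and> emeasure (lam y) (UNIV - (X \<inter> \<pi> -` {y})) = 0)"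

definition Borel_system_of_measures ::
  "('a::topological_space) set \<Rightarrow> ('b::topological_space) set \<Rightarrow> ('a \<Rightarrow> 'b) \<Rightarrow> ('b \<Rightarrow> 'a measure) \<Rightarrow> bool" where
  "Borel_system_of_measures X Y \<pi> lam \<longleftrightarrow> system_of_measures X Y \<pi> lam \<and>
     (\<forall>E\<in>sets borel. (\<lambda>y. emeasure (lam y) E) \<in> borel_measurable (restrict_space borel Y))"

definition locally_finite_som ::
  "('a::topological_space) set \<Rightarrow> ('b::topological_space) set \<Rightarrow> ('b \<Rightarrow> 'a measure) \<Rightarrow> bool" where
  "locally_finite_som X Y lam \<longleftrightarrow>
     (\<forall>x\<in>X. \<exists>U. open U \<and> x \<in> U \<and> (\<forall>y\<in>Y. emeasure (lam y) U < \<infinity>))"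

definition disintegration ::
  "('a::topological_space) set \<Rightarrow> ('b::topological_space) set \<Rightarrow> ('a \<Rightarrow> 'b) \<Rightarrow> ('b \<Rightarrow> 'a measure) \<Rightarrow>
   'a measure \<Rightarrow> 'b measure \<Rightarrow> bool" where
  "disintegration X Y f gam mu nu \<longleftrightarrow> Borel_system_of_measures X Y f gam \<and>
     (\<forall>E\<in>sets borel. emeasure mu E = (\<integral>\<^sup>+ y. emeasure (gam y) E \<partial>nu))"

definition weak_pullback_units ::
  "'s groupoid \<Rightarrow> 'g groupoid \<Rightarrow> 't groupoid \<Rightarrow> ('s \<Rightarrow> 'g) \<Rightarrow> ('t \<Rightarrow> 'g) \<Rightarrow> ('s \<times> 'g \<times> 't) set" where
  "weak_pullback_units S G T p q =
     {(s, g, t). s \<in> units S \<and> t \<in> units T \<and> rng G g = p s \<and> src G g = q t}"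

end

theory Submission
  imports Defs
begin

(* Each eta^x = gamma_p^(r x) x delta_x x gamma_q^(d x) is a product measure, so everything reduces
   to the fibre measures. As gamma_p^(r x) lives on S^(0) /\ p^-1(r x) and gamma_q^(d x) on
   T^(0) /\ q^-1(d x), eta^x lives on their product with {x}, which is the fibre of P^(0) over x;
   and a rectangle U x G x V built from neighbourhoods witnessing local finiteness of gamma_p and
   gamma_q has eta^x-measure gamma_p^(r x)(U) * gamma_q^(d x)(V) < oo.
   The delicate point is Borel measurability of
   x |-> eta^x(E) = int int 1_E(s, x, t) d gamma_q^(d x)(t) d gamma_p^(r x)(s).
   By Lindeloef, a locally finite system of measures on a second countable space is a countable
   sum of finite Borel kernels; normalising a finite kernel makes it a measurable map into the
   Giry space of subprobability measures, and parametrised integrals of jointly measurable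
   functions against such maps are measurable. *)

lemma borel_prod_prod:
  "(borel :: 'a::second_countable_topology measure) \<Otimes>\<^sub>M
     ((borel :: 'b::second_countable_topology measure) \<Otimes>\<^sub>M (borel :: 'c::second_countable_topology measure))
   = (borel :: ('a \<times> 'b \<times> 'c) measure)"
  by (simp add: borel_prod)

lemma nn_integral_return_borel:
  "(\<integral>\<^sup>+y. f y \<partial>return borel (x::'a::t1_space)) = f x"
proof -
  have "AE y in return borel x. y = x"
    by (simp add: AE_return)
  then have "(\<integral>\<^sup>+y. f y \<partial>return borel x) = (\<integral>\<^sup>+y. f x \<partial>return borel x)"
    by (intro nn_integral_cong_AE) auto
  then show ?thesis
    by (simp add: emeasure_return)
qed

lemma nn_integral_normalize_measure:
  assumes "emeasure M (space M) < \<infinity>" "f \<in> borel_measurable M"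
  shows "(\<integral>\<^sup>+y. f y \<partial>M)
    = emeasure M (space M) * (\<integral>\<^sup>+y. f y \<partial>scale_measure (inverse (emeasure M (space M))) M)"
proof (cases "emeasure M (space M) = 0")
  case True
  then have "(\<integral>\<^sup>+y. f y \<partial>M) = (\<integral>\<^sup>+y. 0 \<partial>M)"
    by (intro nn_integral_cong_AE emeasure_0_AE)
  with True show ?thesis
    by simp
next
  case False
  with assms(1) have "emeasure M (space M) * inverse (emeasure M (space M)) = 1"
    using ennreal_divide_self by (simp add: divide_ennreal_def)
  with assms(2) show ?thesis
    by (simp add: nn_integral_scale_measure mult.assoc[symmetric])
qed

lemma ennreal_inverse_mult_self_le_1: "inverse c * c \<le> (1::ennreal)"
  by (cases "c = 0"; cases "c = \<infinity>")
    (auto simp: divide_ennreal_def[symmetric] mult.commute ennreal_divide_self top.not_eq_extremum)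

lemma measurable_nn_integral_finite_kernel:
  assumes sets: "\<And>x. x \<in> space M \<Longrightarrow> sets (K x) = sets N"
    and finite: "\<And>x. x \<in> space M \<Longrightarrow> emeasure (K x) (space N) < \<infinity>"
    and meas: "\<And>A. A \<in> sets N \<Longrightarrow> (\<lambda>x. emeasure (K x) A) \<in> borel_measurable M"
    and f: "(\<lambda>(x, y). f x y) \<in> borel_measurable (M \<Otimes>\<^sub>M N)"
  shows "(\<lambda>x. \<integral>\<^sup>+y. f x y \<partial>K x) \<in> borel_measurable M"
proof (cases "space N = {}")
  case True
  then have "(\<integral>\<^sup>+y. f x y \<partial>K x) = 0" if "x \<in> space M" for x
    using sets_eq_imp_space_eq[OF sets[OF that]] by (simp add: nn_integral_empty)
  then show ?thesis
    by (subst measurable_cong) auto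
next
  case False
  define c where "c x = emeasure (K x) (space N)" for x
  \<comment> \<open>the normalised kernel is a measurable map into the Giry space\<close>
  define L where "L x = scale_measure (inverse (c x)) (K x)" for x
  have space_K: "space (K x) = space N" if "x \<in> space M" for x
    using sets_eq_imp_space_eq[OF sets[OF that]] .
  have "L \<in> M \<rightarrow>\<^sub>M subprob_algebra N"
  proof (rule measurable_subprob_algebra)
    fix x assume x: "x \<in> space M"
    show "sets (L x) = sets N"
      using sets[OF x] by (simp add: L_def)
    show "subprob_space (L x)"
      using ennreal_inverse_mult_self_le_1[of "c x"] False
      by (intro subprob_spaceI) (simp_all add: L_def c_def space_scale_measure space_K[OF x])
  next
    fix A assume "A \<in> sets N"
    then show "(\<lambda>x. emeasure (L x) A) \<in> borel_measurable M"
      unfolding L_def c_def using meas by (simp add: measurable_compose[OF _ borel_measurable_inverse])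
  qed
  then have "(\<lambda>x. c x * (\<integral>\<^sup>+y. f x y \<partial>L x)) \<in> borel_measurable M"
    using meas[OF sets.top] nn_integral_measurable_subprob_algebra2[OF f]
    unfolding c_def by (intro borel_measurable_times_ennreal) auto
  moreover have "(\<integral>\<^sup>+y. f x y \<partial>K x) = c x * (\<integral>\<^sup>+y. f x y \<partial>L x)" if x: "x \<in> space M" for x
    using nn_integral_normalize_measure[of "K x" "f x"] finite[OF x] measurable_Pair2[OF f x] sets[OF x]
    by (simp add: c_def L_def space_K[OF x] cong: measurable_cong_sets)
  ultimately show ?thesis
    by (subst measurable_cong) auto
qed

lemma measurable_nn_integral_kernel_countable_cover:
  fixes U :: "nat \<Rightarrow> 'b set"
  assumes sets: "\<And>x. x \<in> space M \<Longrightarrow> sets (K x) = sets N"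
    and U: "\<And>i. U i \<in> sets N"
    and finite: "\<And>x i. x \<in> space M \<Longrightarrow> emeasure (K x) (U i) < \<infinity>"
    and null: "\<And>x. x \<in> space M \<Longrightarrow> emeasure (K x) (space N - (\<Union>i. U i)) = 0"
    and meas: "\<And>A. A \<in> sets N \<Longrightarrow> (\<lambda>x. emeasure (K x) A) \<in> borel_measurable M"
    and f: "(\<lambda>(x, y). f x y) \<in> borel_measurable (M \<Otimes>\<^sub>M N)"
  shows "(\<lambda>x. \<integral>\<^sup>+y. f x y \<partial>K x) \<in> borel_measurable M"
proof -
  \<comment> \<open>\<open>K x\<close> is the sum of its restrictions to the disjointed cover, each of them finite\<close>
  define D where "D = disjointed U"
  have D: "D i \<in> sets N" for i
    unfolding D_def disjointed_def using U by (auto intro!: sets.Diff sets.finite_UN)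
  define KD where "KD i x = density (K x) (indicator (D i))" for i x
  have emeasure_KD: "emeasure (KD i x) A = emeasure (K x) (D i \<inter> A)"
    if "x \<in> space M" "A \<in> sets N" for i x A
    unfolding KD_def using D sets that by (intro emeasure_restricted) auto
  have "(\<lambda>x. \<integral>\<^sup>+y. f x y \<partial>KD i x) \<in> borel_measurable M" for i
  proof (rule measurable_nn_integral_finite_kernel[OF _ _ _ f])
    fix x assume x: "x \<in> space M"
    show "sets (KD i x) = sets N"
      using sets[OF x] by (simp add: KD_def)
    have "emeasure (K x) (D i) \<le> emeasure (K x) (U i)"
      using U D sets[OF x] by (intro emeasure_mono) (auto simp: D_def disjointed_subset)
    then show "emeasure (KD i x) (space N) < \<infinity>"
      using finite[OF x, of i] D[of i] sets.sets_into_space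
      by (simp add: emeasure_KD[OF x] Int_absorb2)
  next
    fix A assume "A \<in> sets N"
    with D meas show "(\<lambda>x. emeasure (KD i x) A) \<in> borel_measurable M"
      by (subst measurable_cong[OF emeasure_KD]) auto
  qed
  then have "(\<lambda>x. \<Sum>i. \<integral>\<^sup>+y. f x y \<partial>KD i x) \<in> borel_measurable M"
    by measurable
  moreover have "(\<integral>\<^sup>+y. f x y \<partial>K x) = (\<Sum>i. \<integral>\<^sup>+y. f x y \<partial>KD i x)" if x: "x \<in> space M" for x
  proof -
    have fx: "f x \<in> borel_measurable (K x)"
      using measurable_Pair2[OF f x] sets[OF x] by (simp cong: measurable_cong_sets)
    have D_K: "D i \<in> sets (K x)" for i
      using D sets[OF x] by simp
    have "AE y in K x. y \<in> (\<Union>i. U i)"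
      using null[OF x] sets[OF x] U sets_eq_imp_space_eq[OF sets[OF x]]
      by (intro AE_I'[of "space N - (\<Union>i. U i)"]) (auto simp: null_sets_def)
    then have "AE y in K x. f x y = (\<Sum>i. indicator (D i) y * f x y)"
      by eventually_elim
        (simp add: ennreal_suminf_multc suminf_indicator D_def disjoint_family_disjointed UN_disjointed_eq)
    then have "(\<integral>\<^sup>+y. f x y \<partial>K x) = (\<integral>\<^sup>+y. (\<Sum>i. indicator (D i) y * f x y) \<partial>K x)"
      by (rule nn_integral_cong_AE)
    also have "\<dots> = (\<Sum>i. \<integral>\<^sup>+y. indicator (D i) y * f x y \<partial>K x)"
      using fx D_K by (intro nn_integral_suminf) simp
    also have "\<dots> = (\<Sum>i. \<integral>\<^sup>+y. f x y \<partial>KD i x)"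
      using fx D_K by (simp add: KD_def nn_integral_density)
    finally show ?thesis .
  qed
  ultimately show ?thesis
    by (subst measurable_cong) auto
qed

lemma countable_open_cover:
  fixes X :: "'a::second_countable_topology set"
  assumes "\<And>x. x \<in> X \<Longrightarrow> \<exists>U. open U \<and> x \<in> U \<and> P U" and "P {}"
  obtains U :: "nat \<Rightarrow> 'a set" where "\<And>i. open (U i)" "\<And>i. P (U i)" "X \<subseteq> (\<Union>i. U i)"
proof -
  let ?\<O> = "{U. open U \<and> P U}"
  obtain \<F> where \<F>: "\<F> \<subseteq> ?\<O>" "countable \<F>" "\<Union>\<F> = \<Union>?\<O>"
    using Lindelof[of ?\<O>] by auto
  define U where "U = from_nat_into (insert {} \<F>)"
  have range_U: "range U = insert {} \<F>"
    unfolding U_def using \<F>(2) by (intro range_from_nat_into) auto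
  have "open (U i) \<and> P (U i)" for i
  proof -
    have "U i \<in> insert {} \<F>"
      using range_U by blast
    with \<F>(1) assms(2) show ?thesis
      by auto
  qed
  moreover have "X \<subseteq> (\<Union>i. U i)"
  proof
    fix x assume "x \<in> X"
    with assms(1) \<F>(3) have "x \<in> \<Union>\<F>"
      by blast
    with range_U show "x \<in> (\<Union>i. U i)"
      by (metis UnionI Union_insert Un_iff)
  qed
  ultimately show ?thesis
    using that by blast
qed

lemma closed_units:
  assumes "topological_groupoid G"
  shows "closed (units G)"
proof -
  from assms have "groupoid G" "continuous_on UNIV (rng G)"
    unfolding topological_groupoid_def by blast+
  from \<open>groupoid G\<close> have range_units: "rng G x \<in> units G" and range_unit: "u \<in> units G \<Longrightarrow> rng G u = u" for x u
    unfolding groupoid_def by (elim conjE; blast)+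
  have "units G = {x. rng G x = id x}"
  proof (intro set_eqI iffI)
    fix x
    show "x \<in> units G \<Longrightarrow> x \<in> {x. rng G x = id x}"
      using range_unit by simp
    show "x \<in> {x. rng G x = id x} \<Longrightarrow> x \<in> units G"
      using range_units[of x] by simp
  qed
  moreover have "closed {x. rng G x = id x}"
    by (intro closed_Collect_eq \<open>continuous_on UNIV (rng G)\<close> continuous_on_id')
  ultimately show ?thesis
    by simp
qed

text \<open>Closedness of \<open>X\<close> makes the fibres \<open>X \<inter> \<pi> -` {y}\<close> Borel; without it the concentration
  condition of a system of measures would be vacuous, as \<open>emeasure\<close> vanishes on non-measurable sets.\<close>

lemma locally_finite_som_countable_cover:
  fixes gam :: "'b::t1_space \<Rightarrow> 'a::second_countable_topology measure"
  assumes "system_of_measures X Y \<pi> gam" "locally_finite_som X Y gam"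
    and "closed X" "continuous_on UNIV \<pi>"
  obtains U :: "nat \<Rightarrow> 'a set" where "\<And>i. open (U i)"
    "\<And>i y. y \<in> Y \<Longrightarrow> emeasure (gam y) (U i) < \<infinity>"
    "\<And>y. y \<in> Y \<Longrightarrow> emeasure (gam y) (UNIV - (\<Union>i. U i)) = 0"
proof -
  obtain U :: "nat \<Rightarrow> 'a set" where U: "\<And>i. open (U i)"
      "\<And>i. \<forall>y\<in>Y. emeasure (gam y) (U i) < \<infinity>" "X \<subseteq> (\<Union>i. U i)"
    using countable_open_cover[of X "\<lambda>U. \<forall>y\<in>Y. emeasure (gam y) U < \<infinity>"] assms(2)
    unfolding locally_finite_som_def by auto
  have "emeasure (gam y) (UNIV - (\<Union>i. U i)) = 0" if y: "y \<in> Y" for y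
  proof -
    have fibre: "sets (gam y) = sets borel" "emeasure (gam y) (UNIV - (X \<inter> \<pi> -` {y})) = 0"
      using assms(1) y unfolding system_of_measures_def by auto
    have "closed (X \<inter> \<pi> -` {y})"
      using assms(3) closed_vimage[OF closed_singleton assms(4)] by blast
    then have "emeasure (gam y) (UNIV - (\<Union>i. U i)) \<le> emeasure (gam y) (UNIV - (X \<inter> \<pi> -` {y}))"
      using U(3) fibre(1) by (intro emeasure_mono) auto
    with fibre(2) show ?thesis
      by simp
  qed
  with U that show ?thesis
    by blast
qed

lemma sigma_finite_locally_finite_som:
  fixes gam :: "'b::t1_space \<Rightarrow> 'a::second_countable_topology measure"
  assumes "system_of_measures X Y \<pi> gam" "locally_finite_som X Y gam"
    and "closed X" "continuous_on UNIV \<pi>" and y: "y \<in> Y"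
  shows "sigma_finite_measure (gam y)"
proof -
  obtain U :: "nat \<Rightarrow> 'a set" where U: "\<And>i. open (U i)"
      "\<And>i. emeasure (gam y) (U i) < \<infinity>" "emeasure (gam y) (UNIV - (\<Union>i. U i)) = 0"
    using locally_finite_som_countable_cover[OF assms(1-4)] y by metis
  have sets: "sets (gam y) = sets borel"
    using assms(1) y unfolding system_of_measures_def by auto
  show ?thesis
  proof (unfold_locales, intro exI conjI)
    let ?A = "insert (UNIV - (\<Union>i. U i)) (range U)"
    show "countable ?A"
      by simp
    show "?A \<subseteq> sets (gam y)"
      using U(1) sets by (auto intro: borel_closed)
    show "\<Union>?A = space (gam y)"
      using sets_eq_imp_space_eq[OF sets] by auto
    show "\<forall>a\<in>?A. emeasure (gam y) a \<noteq> \<infinity>"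
      using U(2,3) by (auto simp: less_top[symmetric])
  qed
qed

lemma measurable_nn_integral_locally_finite_som:
  fixes gam :: "'b::t1_space \<Rightarrow> 'a::second_countable_topology measure"
  assumes gam: "Borel_system_of_measures X Y \<pi> gam" "locally_finite_som X Y gam"
    and "closed X" "continuous_on UNIV \<pi>"
    and h: "h \<in> M \<rightarrow>\<^sub>M borel" "\<And>z. z \<in> space M \<Longrightarrow> h z \<in> Y"
    and f: "(\<lambda>(z, a). f z a) \<in> borel_measurable (M \<Otimes>\<^sub>M borel)"
  shows "(\<lambda>z. \<integral>\<^sup>+a. f z a \<partial>gam (h z)) \<in> borel_measurable M"
proof -
  have system: "system_of_measures X Y \<pi> gam"
    using gam(1) unfolding Borel_system_of_measures_def by simp
  obtain U :: "nat \<Rightarrow> 'a set" where U: "\<And>i. open (U i)"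
      "\<And>i y. y \<in> Y \<Longrightarrow> emeasure (gam y) (U i) < \<infinity>"
      "\<And>y. y \<in> Y \<Longrightarrow> emeasure (gam y) (UNIV - (\<Union>i. U i)) = 0"
    using locally_finite_som_countable_cover[OF system gam(2) assms(3,4)] by metis
  have "h \<in> M \<rightarrow>\<^sub>M restrict_space borel Y"
    using h by (intro measurable_restrict_space2) auto
  then have measurable_emeasure: "(\<lambda>z. emeasure (gam (h z)) A) \<in> borel_measurable M"
    if "A \<in> sets borel" for A
    using gam(1) that measurable_compose unfolding Borel_system_of_measures_def by blast
  show ?thesis
  proof (rule measurable_nn_integral_kernel_countable_cover[where U = U, OF _ _ _ _ measurable_emeasure f])
    fix z assume z: "z \<in> space M"
    show "sets (gam (h z)) = sets borel"
      using system h(2)[OF z] unfolding system_of_measures_def by blast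
    show "emeasure (gam (h z)) (U i) < \<infinity>" for i
      using U(2) h(2)[OF z] by blast
    show "emeasure (gam (h z)) (space borel - (\<Union>i. U i)) = 0"
      using U(3) h(2)[OF z] by simp
  qed (use U(1) in auto)
qed

lemma Times_in_borel:
  assumes "P \<in> sets (borel :: 'a::second_countable_topology measure)"
    and "Q \<in> sets (borel :: 'b::second_countable_topology measure)"
    and "R \<in> sets (borel :: 'c::second_countable_topology measure)"
  shows "P \<times> Q \<times> R \<in> sets (borel :: ('a \<times> 'b \<times> 'c) measure)"
  using assms unfolding borel_prod_prod[symmetric] by (intro pair_measureI) simp_all

lemma sets_pair_return_pair:
  assumes "sets A = sets (borel :: 'a::second_countable_topology measure)"
    and "sets B = sets (borel :: 'c::second_countable_topology measure)"
  shows "sets (A \<Otimes>\<^sub>M (return borel (x::'b::second_countable_topology) \<Otimes>\<^sub>M B)) = sets (borel :: ('a \<times> 'b \<times> 'c) measure)"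
  using assms by (simp add: borel_prod_prod[symmetric] cong: sets_pair_measure_cong)

lemma emeasure_pair_return_pair:
  fixes x :: "'b::{second_countable_topology,t1_space}"
  assumes A: "sets A = sets (borel :: 'a::second_countable_topology measure)"
    and B: "sets B = sets (borel :: 'c::second_countable_topology measure)" "sigma_finite_measure B"
    and E: "E \<in> sets (borel :: ('a \<times> 'b \<times> 'c) measure)"
  shows "emeasure (A \<Otimes>\<^sub>M (return borel x \<Otimes>\<^sub>M B)) E = (\<integral>\<^sup>+s. \<integral>\<^sup>+t. indicator E (s, x, t) \<partial>B \<partial>A)"
proof -
  interpret B: sigma_finite_measure B
    by (fact B(2))
  interpret xB: sigma_finite_measure "return borel x \<Otimes>\<^sub>M B"
    by (intro sigma_finite_pair_measure prob_space_imp_sigma_finite prob_space_return B(2)) simp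
  have E_sets: "E \<in> sets (A \<Otimes>\<^sub>M (return borel x \<Otimes>\<^sub>M B))"
    unfolding sets_pair_return_pair[OF A B(1)] by (fact E)
  have "emeasure (A \<Otimes>\<^sub>M (return borel x \<Otimes>\<^sub>M B)) E
      = (\<integral>\<^sup>+s. \<integral>\<^sup>+w. indicator E (s, w) \<partial>(return borel x \<Otimes>\<^sub>M B) \<partial>A)"
    by (rule xB.emeasure_pair_measure[OF E_sets])
  also have "\<dots> = (\<integral>\<^sup>+s. \<integral>\<^sup>+t. indicator E (s, x, t) \<partial>B \<partial>A)"
  proof (rule nn_integral_cong)
    fix s
    have "(\<integral>\<^sup>+w. indicator E (s, w) \<partial>(return borel x \<Otimes>\<^sub>M B)) = emeasure (return borel x \<Otimes>\<^sub>M B) (Pair s -` E)"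
      using nn_integral_indicator[OF sets_Pair1[OF E_sets]] by (simp add: indicator_vimage)
    also have "\<dots> = (\<integral>\<^sup>+g. \<integral>\<^sup>+t. indicator (Pair s -` E) (g, t) \<partial>B \<partial>return borel x)"
      using sets_Pair1[OF E_sets] by (rule B.emeasure_pair_measure)
    finally show "(\<integral>\<^sup>+w. indicator E (s, w) \<partial>(return borel x \<Otimes>\<^sub>M B)) = (\<integral>\<^sup>+t. indicator E (s, x, t) \<partial>B)"
      by (simp add: nn_integral_return_borel indicator_vimage)
  qed
  finally show ?thesis .
qed

lemma emeasure_pair_return_pair_Times:
  fixes x :: "'b::{second_countable_topology,t1_space}"
  assumes "sets A = sets (borel :: 'a::second_countable_topology measure)"
    and "sets B = sets (borel :: 'c::second_countable_topology measure)" "sigma_finite_measure B"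
    and "P \<in> sets borel" "Q \<in> sets borel" "R \<in> sets borel"
  shows "emeasure (A \<Otimes>\<^sub>M (return borel x \<Otimes>\<^sub>M B)) (P \<times> Q \<times> R) = emeasure A P * indicator Q x * emeasure B R"
proof -
  have "(\<integral>\<^sup>+t. indicator (P \<times> Q \<times> R) (s, x, t) \<partial>B) = indicator P s * (indicator Q x * emeasure B R)" for s
    using nn_integral_cmult_indicator[of R B "indicator P s * indicator Q x"] assms(2,6)
    by (simp add: indicator_times mult.assoc)
  moreover have "P \<times> Q \<times> R \<in> sets (borel :: ('a \<times> 'b \<times> 'c) measure)"
    using assms(4-6) by (rule Times_in_borel)
  ultimately have "emeasure (A \<Otimes>\<^sub>M (return borel x \<Otimes>\<^sub>M B)) (P \<times> Q \<times> R)
      = (\<integral>\<^sup>+s. indicator P s * (indicator Q x * emeasure B R) \<partial>A)"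
    by (simp add: emeasure_pair_return_pair[OF assms(1-3)])
  also have "\<dots> = emeasure A P * indicator Q x * emeasure B R"
    using assms(1,4) by (simp add: nn_integral_multc mult.assoc)
  finally show ?thesis .
qed

text \<open>\<open>X\<close>, \<open>Z\<close>, \<open>Y\<close> play the roles of the unit spaces of \<open>S\<close>, \<open>T\<close>, \<open>G\<close>, and \<open>r\<close>, \<open>d\<close> those
  of the range and source maps of \<open>G\<close>; \<open>pullback\<close> is the unit space of the weak pullback.\<close>

locale pullback_of_systems_of_measures =
  fixes X :: "'s::second_countable_topology set" and Z :: "'t::second_countable_topology set"
    and Y :: "'y::t1_space set"
    and p :: "'s \<Rightarrow> 'y" and q :: "'t \<Rightarrow> 'y"
    and r d :: "'g::{second_countable_topology,t1_space} \<Rightarrow> 'y"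
    and gp :: "'y \<Rightarrow> 's measure" and gq :: "'y \<Rightarrow> 't measure"
  assumes gp: "Borel_system_of_measures X Y p gp" "locally_finite_som X Y gp"
    and gq: "Borel_system_of_measures Z Y q gq" "locally_finite_som Z Y gq"
    and closed_X: "closed X" and closed_Z: "closed Z"
    and continuous_p: "continuous_on UNIV p" and continuous_q: "continuous_on UNIV q"
    and continuous_r: "continuous_on UNIV r" and continuous_d: "continuous_on UNIV d"
    and r_in_Y: "r g \<in> Y" and d_in_Y: "d g \<in> Y"
begin

definition pullback :: "('s \<times> 'g \<times> 't) set" where
  "pullback = {(s, g, t). s \<in> X \<and> t \<in> Z \<and> r g = p s \<and> d g = q t}"

definition eta :: "'g \<Rightarrow> ('s \<times> 'g \<times> 't) measure" where
  "eta g = gp (r g) \<Otimes>\<^sub>M (return borel g \<Otimes>\<^sub>M gq (d g))"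

lemma system_gp: "system_of_measures X Y p gp" and system_gq: "system_of_measures Z Y q gq"
  using gp(1) gq(1) unfolding Borel_system_of_measures_def by simp_all

lemma sets_gp: "sets (gp (r g)) = sets borel" and sets_gq: "sets (gq (d g)) = sets borel"
  using system_gp system_gq r_in_Y d_in_Y unfolding system_of_measures_def by simp_all

lemma sigma_finite_gq: "sigma_finite_measure (gq (d g))"
  using sigma_finite_locally_finite_som[OF system_gq gq(2) closed_Z continuous_q d_in_Y] .

lemma sets_eta: "sets (eta g) = sets borel"
  unfolding eta_def by (rule sets_pair_return_pair[OF sets_gp sets_gq])

lemma emeasure_eta:
  "E \<in> sets borel \<Longrightarrow> emeasure (eta g) E = (\<integral>\<^sup>+s. \<integral>\<^sup>+t. indicator E (s, g, t) \<partial>gq (d g) \<partial>gp (r g))"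
  unfolding eta_def by (rule emeasure_pair_return_pair[OF sets_gp sets_gq sigma_finite_gq])

lemma emeasure_eta_Times:
  assumes "P \<in> sets borel" "Q \<in> sets borel" "R \<in> sets borel"
  shows "emeasure (eta g) (P \<times> Q \<times> R) = emeasure (gp (r g)) P * indicator Q g * emeasure (gq (d g)) R"
  unfolding eta_def by (rule emeasure_pair_return_pair_Times[OF sets_gp sets_gq sigma_finite_gq assms])

lemma measurable_emeasure_eta:
  assumes E: "E \<in> sets borel"
  shows "(\<lambda>g. emeasure (eta g) E) \<in> borel_measurable borel"
proof -
  have [measurable]: "E \<in> sets ((borel :: 's measure) \<Otimes>\<^sub>M ((borel :: 'g measure) \<Otimes>\<^sub>M (borel :: 't measure)))"
    using E unfolding borel_prod_prod .
  have [measurable]: "r \<in> borel_measurable borel" "d \<in> borel_measurable borel"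
    using continuous_r continuous_d by (simp_all add: borel_measurable_continuous_onI)
  have "(\<lambda>w. \<integral>\<^sup>+t. indicator E (snd w, fst w, t) \<partial>gq (d (fst w)))
      \<in> borel_measurable ((borel :: 'g measure) \<Otimes>\<^sub>M (borel :: 's measure))"
  proof (rule measurable_nn_integral_locally_finite_som[OF gq closed_Z continuous_q])
    show "(\<lambda>w. d (fst w)) \<in> borel \<Otimes>\<^sub>M borel \<rightarrow>\<^sub>M borel"
      by measurable
    show "(\<lambda>(w, t). indicator E (snd w, fst w, t)) \<in> borel_measurable ((borel \<Otimes>\<^sub>M borel) \<Otimes>\<^sub>M borel)"
      by measurable
  qed (rule d_in_Y)
  then have "(\<lambda>g. \<integral>\<^sup>+s. \<integral>\<^sup>+t. indicator E (s, g, t) \<partial>gq (d g) \<partial>gp (r g)) \<in> borel_measurable borel"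
    by (intro measurable_nn_integral_locally_finite_som[OF gp closed_X continuous_p])
      (simp_all add: r_in_Y case_prod_beta')
  with E show ?thesis
    by (simp add: emeasure_eta)
qed

lemma emeasure_eta_outside_fibre:
  "emeasure (eta g) (UNIV - (pullback \<inter> (\<lambda>(s, g, t). g) -` {g})) = 0"
proof -
  define C where "C = X \<inter> p -` {r g}"
  define D where "D = Z \<inter> q -` {d g}"
  have "closed C" "closed D"
    unfolding C_def D_def using closed_X closed_Z continuous_p continuous_q
    by (auto intro!: closed_Int closed_vimage)
  then have Borel: "UNIV - C \<in> sets borel" "UNIV - {g} \<in> sets borel" "UNIV - D \<in> sets borel"
    by (auto intro: borel_open)
  have "emeasure (gp (r g)) (UNIV - C) = 0" "emeasure (gq (d g)) (UNIV - D) = 0"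
    using system_gp system_gq r_in_Y d_in_Y unfolding system_of_measures_def C_def D_def by auto
  then have null: "(UNIV - C) \<times> UNIV \<times> UNIV \<union> UNIV \<times> (UNIV - {g}) \<times> UNIV \<union> UNIV \<times> UNIV \<times> (UNIV - D)
      \<in> null_sets (eta g)"
    using Borel by (intro null_sets.Un)
      (simp_all add: null_sets_def sets_eta emeasure_eta_Times Times_in_borel del: UNIV_Times_UNIV)
  have "pullback \<inter> (\<lambda>(s, g, t). g) -` {g} = C \<times> {g} \<times> D"
    by (auto simp: pullback_def C_def D_def)
  moreover have "UNIV - C \<times> {g} \<times> D
      = (UNIV - C) \<times> UNIV \<times> UNIV \<union> UNIV \<times> (UNIV - {g}) \<times> UNIV \<union> UNIV \<times> UNIV \<times> (UNIV - D)"
    by auto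
  ultimately show ?thesis
    using null unfolding null_sets_def by simp
qed

lemma locally_finite_eta: "locally_finite_som pullback UNIV eta"
  unfolding locally_finite_som_def
proof
  fix z assume "z \<in> pullback"
  then obtain s g t where z: "z = (s, g, t)" "s \<in> X" "t \<in> Z"
    unfolding pullback_def by auto
  obtain A where A: "open A" "s \<in> A" "\<forall>y\<in>Y. emeasure (gp y) A < \<infinity>"
    using gp(2) z(2) unfolding locally_finite_som_def by blast
  obtain B where B: "open B" "t \<in> B" "\<forall>y\<in>Y. emeasure (gq y) B < \<infinity>"
    using gq(2) z(3) unfolding locally_finite_som_def by blast
  have "emeasure (eta x) (A \<times> UNIV \<times> B) < \<infinity>" for x
    using A B r_in_Y d_in_Y by (simp add: emeasure_eta_Times borel_open ennreal_mult_less_top)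
  moreover have "open (A \<times> UNIV \<times> B)" "z \<in> A \<times> UNIV \<times> B"
    using A B z by (auto intro: open_Times)
  ultimately show "\<exists>U. open U \<and> z \<in> U \<and> (\<forall>x\<in>UNIV. emeasure (eta x) U < \<infinity>)"
    by blast
qed

lemma Borel_system_eta: "Borel_system_of_measures pullback UNIV (\<lambda>(s, g, t). g) eta"
  unfolding Borel_system_of_measures_def system_of_measures_def
  using sets_eta emeasure_eta_outside_fibre measurable_emeasure_eta by simp

end

theorem proposition5p3:
  fixes S :: "('s::{second_countable_topology,t2_space}) groupoid"
    and G :: "('g::{second_countable_topology,t2_space}) groupoid"
    and T :: "('t::{second_countable_topology,t2_space}) groupoid"
    and lamS :: "'s \<Rightarrow> 's measure" and muS :: "'s measure"
    and lamG :: "'g \<Rightarrow> 'g measure" and muG :: "'g measure"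
    and lamT :: "'t \<Rightarrow> 't measure" and muT :: "'t measure"
    and p :: "'s \<Rightarrow> 'g" and q :: "'t \<Rightarrow> 'g"
    and gp :: "'g \<Rightarrow> 's measure" and gq :: "'g \<Rightarrow> 't measure"
  assumes "Haar_groupoid S lamS muS"
    and "Haar_groupoid G lamG muG"
    and "Haar_groupoid T lamT muT"
    and "Haar_groupoid_hom S lamS muS G lamG muG p"
    and "Haar_groupoid_hom T lamT muT G lamG muG q"
    and "disintegration (units S) (units G) p gp muS muG"
    and "locally_finite_som (units S) (units G) gp"
    and "disintegration (units T) (units G) q gq muT muG"
    and "locally_finite_som (units T) (units G) gq"
  shows "Borel_system_of_measures (weak_pullback_units S G T p q) UNIV (\<lambda>(s, g, t). g)
           (\<lambda>x. gp (rng G x) \<Otimes>\<^sub>M (return borel x \<Otimes>\<^sub>M gq (src G x)))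
       \<and> locally_finite_som (weak_pullback_units S G T p q) UNIV
           (\<lambda>x. gp (rng G x) \<Otimes>\<^sub>M (return borel x \<Otimes>\<^sub>M gq (src G x)))"
proof -
  from assms(1-3) have top: "topological_groupoid S" "topological_groupoid G" "topological_groupoid T"
    unfolding Haar_groupoid_def by blast+
  interpret pullback_of_systems_of_measures "units S" "units T" "units G" p q "rng G" "src G" gp gq
  proof
    show "Borel_system_of_measures (units S) (units G) p gp" "Borel_system_of_measures (units T) (units G) q gq"
      using assms(6,8) unfolding disintegration_def by blast+
    show "locally_finite_som (units S) (units G) gp" "locally_finite_som (units T) (units G) gq"
      by (fact assms(7,9))+
    show "closed (units S)" "closed (units T)"
      using closed_units top(1,3) by blast+
    show "continuous_on UNIV p" "continuous_on UNIV q"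
      using assms(4,5) unfolding Haar_groupoid_hom_def by blast+
    show "continuous_on UNIV (rng G)" "continuous_on UNIV (src G)"
      using top(2) unfolding topological_groupoid_def by blast+
    show "rng G g \<in> units G" "src G g \<in> units G" for g
      using top(2) unfolding topological_groupoid_def groupoid_def by (elim conjE; blast)+
  qed
  have "weak_pullback_units S G T p q = pullback"
    unfolding weak_pullback_units_def pullback_def ..
  with Borel_system_eta locally_finite_eta show ?thesis
    unfolding eta_def by simp
qed

end
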